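(* Let $l\ge2$ and $m_1,\dots,m_l\ge3$ be integers. The join $C_{m_1}*\dots*C_{m_l}$ of cycles is (isomorphic to) a circulant graph if and only if $m_1=\dots=m_l=m$ for some $m\ge3$. In that case $C_m*\dots*C_m$ ($l$ copies) is isomorphic to $C_{lm}(S)$ where $S=\{s\in\{1,\dots,\lfloor lm/2\rfloor\}: s=l \text{ or } l\nmid s\}$ (i.e. $\{1,\dots,\lfloor lm/2\rfloor\}$ with $2l,3l,\dots$ removed); explicitly, the induced subgraphs on $V_i=\{i,l+i,\dots,(m-1)l+i\}$, $0\le i<l$, are $m$-cycles and all edges between distinct $V_i$ are present.
   Context: $C_m$ is the cycle of length $m$. The circulant graph $C_n(S)$ ($S\subseteq\{1,\dots,\lfloor n/2\rfloor\}$) has vertex set $\{0,\dots,n-1\}$ with $\{a,b\}$ an edge iff $\min(|a-b|,n-|a-b|)\in S$. The join $G*H$ of graphs with disjoint vertex sets has all edges of $G$, of $H$, and all pairs $\{x,y\}$ with $x\in V(G)$, $y\in V(H)$. *)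

theory Defs
  imports Main
begin

text \<open>Simple graphs are given by a vertex set V and a symmetric irreflexive
adjacency relation E (only its restriction to V matters).\<close>

definition graph_iso :: "'a set \<Rightarrow> ('a \<Rightarrow> 'a \<Rightarrow> bool) \<Rightarrow> 'b set \<Rightarrow> ('b \<Rightarrow> 'b \<Rightarrow> bool) \<Rightarrow> bool" where
  "graph_iso V E W F \<longleftrightarrow> (\<exists>f. bij_betw f V W \<and> (\<forall>x\<in>V. \<forall>y\<in>V. E x y \<longleftrightarrow> F (f x) (f y)))"

definition cyc_adj :: "nat \<Rightarrow> nat \<Rightarrow> nat \<Rightarrow> bool" where
  "cyc_adj m a b \<longleftrightarrow> a < m \<and> b < m \<and> a \<noteq> b \<and> (b = (a + 1) mod m \<or> a = (b + 1) mod m)"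

definition circ_adj :: "nat \<Rightarrow> nat set \<Rightarrow> nat \<Rightarrow> nat \<Rightarrow> bool" where
  "circ_adj n S a b \<longleftrightarrow> a < n \<and> b < n \<and> a \<noteq> b \<and>
     (let d = (if a \<le> b then b - a else a - b) in min d (n - d) \<in> S)"

text \<open>Join C_{m_1} * ... * C_{m_l} of the cycles listed in ms: vertex (i,j) is vertex j
of the i-th cycle; within a copy the cycle edges, between distinct copies all edges.\<close>
definition join_cyc_V :: "nat list \<Rightarrow> (nat \<times> nat) set" where
  "join_cyc_V ms = {(i, j). i < length ms \<and> j < ms ! i}"

definition join_cyc_adj :: "nat list \<Rightarrow> nat \<times> nat \<Rightarrow> nat \<times> nat \<Rightarrow> bool" where
  "join_cyc_adj ms x y \<longleftrightarrow> x \<in> join_cyc_V ms \<and> y \<in> join_cyc_V ms \<and>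
     (if fst x = fst y then cyc_adj (ms ! fst x) (snd x) (snd y) else True)"

definition join_conn :: "nat \<Rightarrow> nat \<Rightarrow> nat set" where
  "join_conn l m = {s \<in> {1..(l * m) div 2}. s = l \<or> \<not> l dvd s}"

end

theory Submission imports Defs begin

text \<open>A circulant graph is vertex-transitive, hence regular, and regularity is preserved by
isomorphisms. In the join of cycles a vertex of the \<open>i\<close>-th cycle is adjacent to its two cycle
neighbours and to every vertex outside its own cycle, so its degree is \<open>|V| - m\<^sub>i + 2\<close>;
regularity therefore forces all \<open>m\<^sub>i\<close> to be equal. Conversely, sending vertex \<open>k\<close> of copy \<open>i\<close>
to \<open>k l + i\<close> identifies the copies with the residue classes mod \<open>l\<close>: two vertices of one class
are at circular distance \<open>t l\<close>, which lies in \<open>S\<close> iff \<open>t = 1\<close>, i.e. iff they are cycle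
neighbours, while the circular distance of vertices in distinct classes is not divisible by \<open>l\<close>.\<close>

definition vertex_degree :: "'a set \<Rightarrow> ('a \<Rightarrow> 'a \<Rightarrow> bool) \<Rightarrow> 'a \<Rightarrow> nat" where
  "vertex_degree V E x = card {y \<in> V. E x y}"

lemma graph_iso_vertex_degree:
  assumes "bij_betw f V W" "\<forall>x\<in>V. \<forall>y\<in>V. E x y \<longleftrightarrow> F (f x) (f y)" "x \<in> V"
  shows "vertex_degree V E x = vertex_degree W F (f x)"
proof -
  have "bij_betw f {y \<in> V. E x y} {w \<in> W. F (f x) w}"
    using assms unfolding bij_betw_def inj_on_def by auto
  then show ?thesis
    unfolding vertex_degree_def by (rule bij_betw_same_card)
qed

lemma circ_adj_sym: "circ_adj n S a b \<longleftrightarrow> circ_adj n S b a"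
  unfolding circ_adj_def Let_def by auto

lemma circ_adj_rotate_to_0:
  assumes "a < n" "b < n"
  shows "circ_adj n S a b \<longleftrightarrow> circ_adj n S 0 ((b + n - a) mod n)"
proof (cases "a \<le> b")
  case True
  have "(b + n - a) mod n = ((b - a) + n) mod n" using True by (simp add: add.commute)
  also have "\<dots> = b - a" using assms by simp
  finally have rot: "(b + n - a) mod n = b - a" .
  have "b - a < n" "a \<noteq> b \<longleftrightarrow> 0 \<noteq> b - a" using assms True by linarith+
  then show ?thesis
    using True assms unfolding circ_adj_def Let_def rot by simp
next
  case False
  then have rot: "(b + n - a) mod n = n - (a - b)" using assms by simp
  have flip: "min (n - (a - b)) (n - (n - (a - b))) = min (a - b) (n - (a - b))"
    using assms False by (simp add: min.commute)
  have "n - (a - b) < n" "0 \<noteq> n - (a - b)" "a \<noteq> b" using assms False by linarith+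
  then show ?thesis
    using False assms unfolding circ_adj_def Let_def rot flip by (simp add: min.commute)
qed

lemma vertex_degree_circ_adj:
  assumes "a < n"
  shows "vertex_degree {0..<n} (circ_adj n S) a = vertex_degree {0..<n} (circ_adj n S) 0"
proof -
  let ?rot = "\<lambda>b. (b + n - a) mod n" and ?unrot = "\<lambda>c. (c + a) mod n"
  have unrot_rot: "?unrot (?rot b) = b" if "b < n" for b
  proof -
    have "?unrot (?rot b) = (b + n - a + a) mod n" by (simp add: mod_add_left_eq)
    then show ?thesis using that assms by simp
  qed
  have rot_unrot: "?rot (?unrot c) = c" if "c < n" for c
  proof -
    have "?rot (?unrot c) = ((c + a) mod n + (n - a)) mod n"
      using assms by (simp add: add.commute add_diff_assoc less_imp_le_nat)
    also have "\<dots> = (c + a + (n - a)) mod n" by (simp add: mod_add_left_eq)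
    also have "\<dots> = c" using that assms by simp
    finally show ?thesis .
  qed
  have "bij_betw ?rot {b \<in> {0..<n}. circ_adj n S a b} {c \<in> {0..<n}. circ_adj n S 0 c}"
  proof (rule bij_betw_byWitness[where f' = ?unrot])
    show "?rot ` {b \<in> {0..<n}. circ_adj n S a b} \<subseteq> {c \<in> {0..<n}. circ_adj n S 0 c}"
      using assms circ_adj_rotate_to_0[OF assms] by auto
    show "?unrot ` {c \<in> {0..<n}. circ_adj n S 0 c} \<subseteq> {b \<in> {0..<n}. circ_adj n S a b}"
      using assms circ_adj_rotate_to_0[OF assms, of "?unrot _"] rot_unrot by auto
  qed (use unrot_rot rot_unrot in auto)
  then show ?thesis
    unfolding vertex_degree_def by (rule bij_betw_same_card)
qed

lemma cyc_adj_sym: "cyc_adj m a b \<longleftrightarrow> cyc_adj m b a"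
  unfolding cyc_adj_def by auto

lemma cyc_adj_iff:
  assumes "j < m"
  shows "cyc_adj m j j' \<longleftrightarrow> j' < m \<and> j \<noteq> j' \<and>
      (j' = (if Suc j = m then 0 else Suc j) \<or> j = (if Suc j' = m then 0 else Suc j'))"
proof -
  have "(j + 1) mod m = (if Suc j = m then 0 else Suc j)" using assms by (simp add: mod_Suc)
  moreover have "j' < m \<Longrightarrow> (j' + 1) mod m = (if Suc j' = m then 0 else Suc j')" by (simp add: mod_Suc)
  ultimately show ?thesis using assms unfolding cyc_adj_def by auto
qed

lemma cyc_adj_neighbours:
  assumes "j < m" "3 \<le> m"
  shows "{j'. cyc_adj m j j'} = {if Suc j = m then 0 else Suc j, if j = 0 then m - 1 else j - 1}"
  using assms unfolding cyc_adj_iff[OF assms(1)] by auto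

lemma card_cyc_adj_neighbours:
  assumes "j < m" "3 \<le> m"
  shows "card {j'. cyc_adj m j j'} = 2"
  using assms unfolding cyc_adj_neighbours[OF assms] by auto

lemma finite_join_cyc_V: "finite (join_cyc_V ms)"
proof -
  have "join_cyc_V ms = Sigma {..<length ms} (\<lambda>i. {..<ms ! i})"
    unfolding join_cyc_V_def by auto
  then show ?thesis by simp
qed

lemma join_cyc_V_copy_subset: "i < length ms \<Longrightarrow> {i} \<times> {..<ms ! i} \<subseteq> join_cyc_V ms"
  unfolding join_cyc_V_def by auto

lemma vertex_degree_join_cyc:
  assumes "i < length ms" "j < ms ! i" "3 \<le> ms ! i"
  shows "vertex_degree (join_cyc_V ms) (join_cyc_adj ms) (i, j) = card (join_cyc_V ms) - ms ! i + 2"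
proof -
  let ?V = "join_cyc_V ms" and ?copy = "{i} \<times> {..<ms ! i}"
  have nbhd: "{y \<in> ?V. join_cyc_adj ms (i, j) y} = (?V - ?copy) \<union> {i} \<times> {j'. cyc_adj (ms ! i) j j'}"
    using assms unfolding join_cyc_adj_def join_cyc_V_def cyc_adj_def by auto
  have "card ((?V - ?copy) \<union> {i} \<times> {j'. cyc_adj (ms ! i) j j'})
      = card (?V - ?copy) + card ({i} \<times> {j'. cyc_adj (ms ! i) j j'})"
    using finite_join_cyc_V card_cyc_adj_neighbours[OF assms(2,3)]
    by (intro card_Un_disjoint) (auto simp: cyc_adj_def card_cartesian_product_singleton)
  also have "\<dots> = card ?V - ms ! i + 2"
    using card_Diff_subset[OF _ join_cyc_V_copy_subset[OF assms(1)]]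
      card_cyc_adj_neighbours[OF assms(2,3)]
    by (simp add: card_cartesian_product_singleton)
  finally show ?thesis
    unfolding vertex_degree_def nbhd .
qed

theorem join_cyc_circulant_imp_equal_lengths:
  assumes "ms \<noteq> []" "\<forall>i < length ms. 3 \<le> ms ! i"
    and "graph_iso (join_cyc_V ms) (join_cyc_adj ms) {0..<n} (circ_adj n S)"
  shows "\<forall>i < length ms. ms ! i = ms ! 0"
proof -
  let ?V = "join_cyc_V ms"
  obtain f where bij: "bij_betw f ?V {0..<n}"
    and adj: "\<forall>x\<in>?V. \<forall>y\<in>?V. join_cyc_adj ms x y \<longleftrightarrow> circ_adj n S (f x) (f y)"
    using assms(3) unfolding graph_iso_def by blast
  have degree: "card ?V - ms ! i + 2 = vertex_degree {0..<n} (circ_adj n S) 0"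
    if i: "i < length ms" for i
  proof -
    have x: "(i, 0) \<in> ?V" using i assms(2) unfolding join_cyc_V_def by auto
    have "card ?V - ms ! i + 2 = vertex_degree ?V (join_cyc_adj ms) (i, 0)"
      using vertex_degree_join_cyc[OF i, of 0] i assms(2) by fastforce
    also have "\<dots> = vertex_degree {0..<n} (circ_adj n S) (f (i, 0))"
      by (rule graph_iso_vertex_degree[OF bij adj x])
    also have "\<dots> = vertex_degree {0..<n} (circ_adj n S) 0"
      using bij x by (intro vertex_degree_circ_adj) (auto simp: bij_betw_def)
    finally show ?thesis .
  qed
  have le: "ms ! i \<le> card ?V" if "i < length ms" for i
    using card_mono[OF finite_join_cyc_V join_cyc_V_copy_subset[OF that]]
    by (simp add: card_cartesian_product_singleton)
  have "length ms > 0" using assms(1) by simp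
  then show ?thesis
    using degree le by (metis add_right_cancel diff_diff_cancel)
qed

lemma index_in_range:
  assumes "k < m" "i < (l::nat)"
  shows "k * l + i < l * m"
proof -
  have "(k + 1) * l \<le> m * l" using assms by (intro mult_le_mono1) simp
  then show ?thesis using assms by (simp add: mult.commute)
qed

lemma circ_adj_join_conn_same_class_less:
  assumes "0 < l" "3 \<le> m" "k < k'" "k' < m" "i < l"
  shows "circ_adj (l * m) (join_conn l m) (k * l + i) (k' * l + i) \<longleftrightarrow> cyc_adj m k k'"
proof -
  define t where "t = k' - k"
  have t: "1 \<le> t" "1 \<le> m - t" using assms by (auto simp: t_def)
  have "k' * l + i - (k * l + i) = t * l" by (simp add: t_def diff_mult_distrib)
  moreover have "l * m - t * l = (m - t) * l" by (simp add: diff_mult_distrib2 mult.commute)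
  moreover have "min (t * l) ((m - t) * l) = min t (m - t) * l" using assms by (auto simp: min_def)
  ultimately have dist:
      "min (k' * l + i - (k * l + i)) (l * m - (k' * l + i - (k * l + i))) = min t (m - t) * l"
    by simp
  have "circ_adj (l * m) (join_conn l m) (k * l + i) (k' * l + i) \<longleftrightarrow> min t (m - t) * l \<in> join_conn l m"
    using assms index_in_range[of k m i l] index_in_range[of k' m i l]
    unfolding circ_adj_def Let_def dist[symmetric] by auto
  also have "\<dots> \<longleftrightarrow> min t (m - t) = 1"
  proof -
    have "l * 2 \<le> l * m" using assms by simp
    then have "l \<le> l * m div 2" by linarith
    moreover have "min t (m - t) * l = l \<longleftrightarrow> min t (m - t) = 1" using assms by simp
    ultimately show ?thesis using assms t unfolding join_conn_def by auto
  qed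
  also have "\<dots> \<longleftrightarrow> cyc_adj m k k'"
    using assms t unfolding cyc_adj_def t_def by (cases "Suc k' = m") (auto simp: mod_if)
  finally show ?thesis .
qed

lemma circ_adj_join_conn_same_class:
  assumes "0 < l" "3 \<le> m" "k < m" "k' < m" "i < l"
  shows "circ_adj (l * m) (join_conn l m) (k * l + i) (k' * l + i) \<longleftrightarrow> cyc_adj m k k'"
proof -
  consider "k < k'" | "k = k'" | "k' < k" by linarith
  then show ?thesis
  proof cases
    case 3
    then show ?thesis
      using circ_adj_join_conn_same_class_less[OF assms(1,2) _ _ assms(5)] assms
        circ_adj_sym cyc_adj_sym by metis
  qed (use circ_adj_join_conn_same_class_less assms in \<open>auto simp: circ_adj_def cyc_adj_def\<close>)
qed

lemma circ_adj_join_conn_distinct_class: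
  assumes "0 < l" "a < l * m" "b < l * m" "a mod l \<noteq> b mod l"
  shows "circ_adj (l * m) (join_conn l m) a b"
proof -
  define d where "d = (if a \<le> b then b - a else a - b)"
  have "a \<noteq> b" using assms(4) by auto
  then have d: "0 < d" "d < l * m" using assms by (auto simp: d_def)
  have "\<not> l dvd d"
    using assms by (auto simp: d_def mod_eq_dvd_iff_nat[symmetric])
  moreover have "\<not> l dvd (l * m - d)"
    using d \<open>\<not> l dvd d\<close> by (metis diff_diff_cancel dvd_diff_nat dvd_triv_left less_imp_le_nat)
  ultimately have "min d (l * m - d) \<in> join_conn l m"
    using d unfolding join_conn_def by (auto simp: min_def)
  then show ?thesis
    using assms d unfolding circ_adj_def Let_def d_def by auto
qed

lemma graph_iso_cyc_residue_class:
  assumes "0 < l" "3 \<le> m" "i < l"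
  shows "graph_iso {0..<m} (cyc_adj m) {k * l + i | k. k < m} (circ_adj (l * m) (join_conn l m))"
proof -
  have "bij_betw (\<lambda>k. k * l + i) {0..<m} {k * l + i | k. k < m}"
    using assms by (intro bij_betw_imageI) (auto simp: inj_on_def)
  then show ?thesis
    unfolding graph_iso_def using circ_adj_join_conn_same_class[OF assms(1,2) _ _ assms(3)] by auto
qed

lemma join_conn_subset: "join_conn l m \<subseteq> {1..(l * m) div 2}"
  unfolding join_conn_def by auto

theorem join_replicate_cyc_circulant:
  assumes "0 < l" "3 \<le> m"
  shows "graph_iso (join_cyc_V (replicate l m)) (join_cyc_adj (replicate l m))
           {0..<l * m} (circ_adj (l * m) (join_conn l m))"
proof -
  let ?V = "join_cyc_V (replicate l m)"
  have V: "?V = {(i, k). i < l \<and> k < m}" unfolding join_cyc_V_def by auto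
  let ?f = "\<lambda>(i, k). k * l + i"
  have "bij_betw ?f ?V {0..<l * m}"
  proof (rule bij_betw_byWitness[where f' = "\<lambda>x. (x mod l, x div l)"])
    show "?f ` ?V \<subseteq> {0..<l * m}" unfolding V using index_in_range by auto
    show "(\<lambda>x. (x mod l, x div l)) ` {0..<l * m} \<subseteq> ?V"
      unfolding V using assms by (auto simp: div_less_iff_less_mult mult.commute)
  qed (auto simp: V)
  moreover have "join_cyc_adj (replicate l m) x y \<longleftrightarrow> circ_adj (l * m) (join_conn l m) (?f x) (?f y)"
    if xy_in: "x \<in> ?V" "y \<in> ?V" for x y
  proof -
    obtain i k i' k' where "x = (i, k)" "y = (i', k')" and "i < l" "k < m" "i' < l" "k' < m"
      using xy_in V by auto
    then show ?thesis
      using xy_in circ_adj_join_conn_same_class[OF assms, of k k' i]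
        circ_adj_join_conn_distinct_class[OF assms(1) index_in_range index_in_range, of k m i k' i']
      unfolding join_cyc_adj_def by auto
  qed
  ultimately show ?thesis
    unfolding graph_iso_def by blast
qed

theorem lemma4p1:
  fixes ms :: "nat list"
  assumes "length ms \<ge> 2" and "\<forall>i < length ms. ms ! i \<ge> 3"
  shows "((\<exists>n S. S \<subseteq> {1..n div 2} \<and>
              graph_iso (join_cyc_V ms) (join_cyc_adj ms) {0..<n} (circ_adj n S))
          \<longleftrightarrow> (\<exists>m \<ge> 3. \<forall>i < length ms. ms ! i = m))
     \<and> (\<forall>m \<ge> 3. let l = length ms; S = join_conn l m in
          graph_iso (join_cyc_V (replicate l m)) (join_cyc_adj (replicate l m))
                    {0..<l * m} (circ_adj (l * m) S)
          \<and> (\<forall>i < l. graph_iso {0..<m} (cyc_adj m) {k * l + i | k. k < m} (circ_adj (l * m) S))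
          \<and> (\<forall>i < l. \<forall>i' < l. \<forall>k < m. \<forall>k' < m. i \<noteq> i' \<longrightarrow>
                 circ_adj (l * m) S (k * l + i) (k' * l + i')))"
proof -
  let ?l = "length ms"
  have l: "0 < ?l" using assms(1) by linarith
  have distinct_classes: "circ_adj (?l * m) (join_conn ?l m) (k * ?l + i) (k' * ?l + i')"
    if "i < ?l" "i' < ?l" "k < m" "k' < m" "i \<noteq> i'" for i i' k k' m
    using that by (intro circ_adj_join_conn_distinct_class[OF l] index_in_range) auto
  show ?thesis
    unfolding Let_def
  proof (intro conjI allI impI)
    show "(\<exists>n S. S \<subseteq> {1..n div 2} \<and> graph_iso (join_cyc_V ms) (join_cyc_adj ms) {0..<n} (circ_adj n S))
      \<longleftrightarrow> (\<exists>m \<ge> 3. \<forall>i < ?l. ms ! i = m)"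
    proof
      assume "\<exists>n S. S \<subseteq> {1..n div 2} \<and> graph_iso (join_cyc_V ms) (join_cyc_adj ms) {0..<n} (circ_adj n S)"
      then have "\<forall>i < ?l. ms ! i = ms ! 0"
        using join_cyc_circulant_imp_equal_lengths[OF _ assms(2)] l by blast
      then show "\<exists>m \<ge> 3. \<forall>i < ?l. ms ! i = m" using assms(2) l by blast
    next
      assume "\<exists>m \<ge> 3. \<forall>i < ?l. ms ! i = m"
      then obtain m where m: "3 \<le> m" "replicate ?l m = ms" by (auto simp: list_eq_iff_nth_eq)
      then have "graph_iso (join_cyc_V ms) (join_cyc_adj ms) {0..<?l * m} (circ_adj (?l * m) (join_conn ?l m))"
        using join_replicate_cyc_circulant[OF l m(1)] by (simp only:)
      then show "\<exists>n S. S \<subseteq> {1..n div 2} \<and> graph_iso (join_cyc_V ms) (join_cyc_adj ms) {0..<n} (circ_adj n S)"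
        using join_conn_subset by blast
    qed
  qed (simp_all add: join_replicate_cyc_circulant[OF l] graph_iso_cyc_residue_class[OF l] distinct_classes)
qed

end
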